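(* Let $f\in\mathbb R[x_1,\ldots,x_d]$ be a convenient non-degenerate weighted homogeneous polynomial, let $\delta_i$ be the exponent of the pure monomial $x_i^{\delta_i}$ of $f$, and for $I\subset\{1,\ldots,d\}$ let $\delta_I=\operatorname{lcm}\{\delta_i:i\in I\}$. For $\varnothing\neq I\subset\{1,\ldots,d\}$ let $\tau_I$ be the compact face of $\Gamma_f$ meeting the $x_i$-axis exactly for $i\in I$. Then, in $\widehat{\mathcal M}[[T]]$, $$S_{\sigma(\tau_I)}(T)=\frac{\mathbb 1}{(\mathbb L-\mathbb 1)^{d-|I|}}\sum_{r\ge1}\mathbb L^{-\sum_{i=1}^d\lfloor r\delta_I/\delta_i\rfloor}T^{r\delta_I}.$$
   Context: $\mathcal{AS}$-sets: semialgebraic $S\subset\mathbb P^n_{\mathbb R}$ such that for every real analytic arc $\gamma:(-1,1)\to\mathbb P^n_{\mathbb R}$ with $\gamma((-1,0))\subset S$ there is $\varepsilon>0$ with $\gamma((0,\varepsilon))\subset S$. For $n\ge1$, $K_0(\mathcal{AS}^n_{\mathrm{mon}})$ is the Grothendieck group of symbols $[\varphi_X:\mathbb R^*\circlearrowright X\to\mathbb R^*]$ ($X$ an $\mathcal{AS}$-set with $\mathbb R^*$-action, action and $\varphi_X$ with $\mathcal{AS}$ graphs, $\varphi_X(\lambda x)=\lambda^n\varphi_X(x)$), modulo equivariant $\mathcal{AS}$-bijections over $\mathbb R^*$, scissor relations for invariant closed $\mathcal{AS}$-subsets, and independence of the lifting of the action to $Y\times\mathbb R^m$ for symbols $\varphi_Y\circ\operatorname{pr}_Y$;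 product is fiber product over $\mathbb R^*$; the Grothendieck ring $K_0(\mathcal{AS})$ acts by $[A]\cdot[\varphi_X]=[\varphi_X\circ\operatorname{pr}_X:A\times X\to\mathbb R^*]$. $K_0(\mathcal{AS}_{\mathrm{mon}})=\varinjlim_nK_0(\mathcal{AS}^n_{\mathrm{mon}})$ (for $n=km$, a level-$m$ action $\lambda\cdot x$ is replaced by $\lambda^k\cdot x$). $\mathbb 1=[\mathrm{id}:\mathbb R^*\to\mathbb R^*]$ with $\lambda\cdot r=\lambda r$, $\mathbb L=[\mathbb R]\cdot\mathbb 1$, $\mathcal M=K_0(\mathcal{AS}_{\mathrm{mon}})[\mathbb L^{-1}]$, $\widehat{\mathcal M}$ the completion with respect to the filtration spanned by $[S]\mathbb L^{-i}$ with $i-\dim S\ge m$ (in which $\mathbb L-\mathbb 1$ is invertible). For $f=\sum c_\nu x^\nu$: $\Gamma_f=\operatorname{Conv}(\bigcup_{c_\nu\neq0}(\nu+\mathbb R^d_{\ge0}))$, $m(k)=\inf\{k\cdot x:x\in\Gamma_f\}$ for $k\in\mathbb R^d_{\ge0}$, $\sigma(\tau)=\{k\in\mathbb R^d_{\ge0}:\{x\in\Gamma_f:k\cdot x=m(k)\}=\tau\}$, $S_{\sigma(\tau)}(T)=\sum_{k\in\sigma(\tau)\cap\mathbb N^d}\mathbb L^{-|k|}T^{m(k)}$, $|k|=\sum_ik_i$. $f$ is convenient if each $x_i^{\delta_i}$, $\delta_i\ge1$, appears in $f$; non-degenerate if for each compact face $\tau$ the partials of $f_\tau=\sum_{\nu\in\tau}c_\nu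 x^\nu$ have no common zero in $(\mathbb R^* )^d$; weighted homogeneous if $f(\lambda^{w_1}x_1,\ldots,\lambda^{w_d}x_d)=\lambda^wf(x)$ for some $w_i,w\in\mathbb N_{>0}$. For such $f$ the compact faces of $\Gamma_f$ are exactly the convex hulls of $\{\delta_ie_i:i\in I\}$ for nonempty $I$. *)

theory Defs
  imports "HOL-Analysis.Analysis" "HOL-Computational_Algebra.Formal_Laurent_Series"
begin

text \<open>A real polynomial in d variables (d = CARD('n)) is encoded by its coefficient
  function c on exponent vectors nu :: 'n => nat, with finite support.\<close>

definition pure_mono :: "'n \<Rightarrow> nat \<Rightarrow> ('n \<Rightarrow> nat)" where
  "pure_mono i a = (\<lambda>j. if j = i then a else 0)"

definition exp_vec :: "('n::finite \<Rightarrow> nat) \<Rightarrow> real^'n" where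
  "exp_vec nu = (\<chi> i. real (nu i))"

definition poly_eval :: "(('n::finite \<Rightarrow> nat) \<Rightarrow> real) \<Rightarrow> real^'n \<Rightarrow> real" where
  "poly_eval c x = (\<Sum>nu\<in>{nu. c nu \<noteq> 0}. c nu * (\<Prod>i\<in>UNIV. (x$i) ^ (nu i)))"

definition partial_eval :: "(('n::finite \<Rightarrow> nat) \<Rightarrow> real) \<Rightarrow> 'n \<Rightarrow> real^'n \<Rightarrow> real" where
  "partial_eval c j x = (\<Sum>nu\<in>{nu. c nu \<noteq> 0}.
      c nu * real (nu j) * (\<Prod>i\<in>UNIV. (x$i) ^ (nu i - (if i = j then 1 else 0))))"

definition newton_polyhedron :: "(('n::finite \<Rightarrow> nat) \<Rightarrow> real) \<Rightarrow> (real^'n) set" where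
  "newton_polyhedron c =
     convex hull (\<Union>nu\<in>{nu. c nu \<noteq> 0}. {x. \<forall>i. real (nu i) \<le> x$i})"

definition supp_fun :: "(real^'n) set \<Rightarrow> real^'n \<Rightarrow> real" where
  "supp_fun G k = Inf ((\<lambda>x. k \<bullet> x) ` G)"

definition dual_cone :: "(real^'n) set \<Rightarrow> (real^'n) set \<Rightarrow> (real^'n) set" where
  "dual_cone G tau = {k. (\<forall>i. 0 \<le> k$i) \<and> {x\<in>G. k \<bullet> x = supp_fun G k} = tau}"

definition face_poly :: "(('n::finite \<Rightarrow> nat) \<Rightarrow> real) \<Rightarrow> (real^'n) set \<Rightarrow> (('n \<Rightarrow> nat) \<Rightarrow> real)" where
  "face_poly c tau = (\<lambda>nu. if exp_vec nu \<in> tau then c nu else 0)"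

definition compact_face :: "(('n::finite \<Rightarrow> nat) \<Rightarrow> real) \<Rightarrow> (real^'n) set \<Rightarrow> bool" where
  "compact_face c tau \<longleftrightarrow> tau face_of newton_polyhedron c \<and> compact tau \<and> tau \<noteq> {}"

definition convenient :: "(('n::finite \<Rightarrow> nat) \<Rightarrow> real) \<Rightarrow> bool" where
  "convenient c \<longleftrightarrow> (\<forall>i. \<exists>\<delta>\<ge>1. c (pure_mono i \<delta>) \<noteq> 0)"

definition non_degenerate :: "(('n::finite \<Rightarrow> nat) \<Rightarrow> real) \<Rightarrow> bool" where
  "non_degenerate c \<longleftrightarrow> (\<forall>tau. compact_face c tau \<longrightarrow>
      \<not> (\<exists>x::real^'n. (\<forall>i. x$i \<noteq> 0) \<and> (\<forall>j. partial_eval (face_poly c tau) j x = 0)))"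

definition weighted_homogeneous :: "(('n::finite \<Rightarrow> nat) \<Rightarrow> real) \<Rightarrow> bool" where
  "weighted_homogeneous c \<longleftrightarrow> (\<exists>(w::'n \<Rightarrow> nat) (W::nat). (\<forall>i. w i > 0) \<and> W > 0 \<and>
      (\<forall>(l::real) x. poly_eval c (\<chi> i. l ^ (w i) * x$i) = l ^ W * poly_eval c x))"

text \<open>Model of the coefficient ring: u = fls_X stands for L^{-1}, so L = fls_X_inv and 1 = 1.
  S_sigma(tau)(T) = sum_{k in sigma(tau) cap N^d} L^{-|k|} T^{m(k)}; the coefficient of T^n is the
  (convergent) series sum_j #{k : m(k) = n, |k| = j} L^{-j}.\<close>
definition S_series :: "(real^'n::finite) set \<Rightarrow> (real^'n) set \<Rightarrow> real fls fps" where
  "S_series G tau = Abs_fps (\<lambda>n. fps_to_fls (Abs_fps (\<lambda>j. of_nat (card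
      {k::'n \<Rightarrow> nat. exp_vec k \<in> dual_cone G tau \<and> supp_fun G (exp_vec k) = real n
                      \<and> sum k UNIV = j}))))"

end

theory Submission
  imports Defs
begin

(*
  Weighted homogeneity with weights w and degree W forces w_i * delta_i = W, so every exponent
  of f lies on the hyperplane sum_i x_i / delta_i = 1.  Hence Gamma_f is the region
  {x >= 0. sum_i x_i / delta_i >= 1}, and its compact face meeting exactly the axes in I is the
  simplex spanned by the points delta_i e_i, i in I.

  For k >= 0 the support function is m(k) = min_i k_i delta_i, and k cuts out the simplex on
  {i. k_i delta_i = m(k)} when m(k) > 0 (an unbounded face when m(k) = 0).  So k lies in
  sigma(tau_I) with m(k) = n iff k_i delta_i = n for i in I and k_i delta_i > n otherwise.
  Such lattice points exist only if n is a positive multiple of delta_I; then k_i = n / delta_i is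
  fixed for i in I, while each k_i with i not in I ranges freely over k_i > n div delta_i and
  contributes L^-(n div delta_i) times the geometric series sum_(j >= 1) L^-j = 1 / (L - 1).
*)

section \<open>Polynomial functions vanishing identically\<close>

lemma coeff_eq_0_if_sum_powers_vanish:
  fixes g :: "nat \<Rightarrow> 'a::{idom,ring_char_0}"
  assumes "finite A" and "\<And>t. (\<Sum>a\<in>A. g a * t ^ a) = 0" and "a \<in> A"
  shows "g a = 0"
proof -
  define p where "p = (\<Sum>a\<in>A. monom (g a) a)"
  have "\<forall>t. poly p t = 0" using assms(2) by (simp add: p_def poly_sum poly_monom)
  then have "coeff p a = 0" by (simp add: poly_all_0_iff_0)
  then show ?thesis using assms(1,3) by (simp add: p_def coeff_sum coeff_monom)
qed

(* Induction on the set V of variables in which the exponents may differ: substituting t for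
   one variable turns the identity into a polynomial identity in t. *)
lemma coeff_eq_0_if_sum_monomials_vanish_vars:
  fixes b :: "('n::finite \<Rightarrow> nat) \<Rightarrow> 'a::{idom,ring_char_0}"
  assumes "finite S" and "\<nu> \<in> S" and "\<And>\<mu> i. \<mu> \<in> S \<Longrightarrow> i \<notin> V \<Longrightarrow> \<mu> i = \<nu> i"
    and "\<And>x::'a^'n. (\<Sum>\<mu>\<in>S. b \<mu> * (\<Prod>i\<in>UNIV. x$i ^ \<mu> i)) = 0"
  shows "b \<nu> = 0"
proof -
  have "finite V" by simp
  then show ?thesis using assms
  proof (induction V arbitrary: S rule: finite_induct)
    case empty
    then have "S = {\<nu>}" by (auto simp: fun_eq_iff)
    then show ?case using empty.prems(4)[of "\<chi> _. 1"] by simp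
  next
    case (insert j V)
    define S' where "S' = {\<mu>\<in>S. \<mu> j = \<nu> j}"
    have split_j: "(\<Prod>i\<in>UNIV. x$i ^ \<mu> i) = x$j ^ \<mu> j * (\<Prod>i\<in>-{j}. x$i ^ \<mu> i)"
      for x :: "'a^'n" and \<mu> :: "'n \<Rightarrow> nat"
      by (simp add: Compl_eq_Diff_UNIV prod.remove)
    have S'_vanish: "(\<Sum>\<mu>\<in>S'. b \<mu> * (\<Prod>i\<in>UNIV. y$i ^ \<mu> i)) = 0" for y :: "'a^'n"
    proof -
      define q where "q a = (\<Sum>\<mu>\<in>{\<mu>\<in>S. \<mu> j = a}. b \<mu> * (\<Prod>i\<in>-{j}. y$i ^ \<mu> i))" for a
      have q_vanish: "(\<Sum>a\<in>(\<lambda>\<mu>. \<mu> j) ` S. q a * t ^ a) = 0" for t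
      proof -
        let ?y = "\<chi> i. if i = j then t else y$i"
        have "(\<Sum>a\<in>(\<lambda>\<mu>. \<mu> j) ` S. q a * t ^ a)
            = (\<Sum>a\<in>(\<lambda>\<mu>. \<mu> j) ` S. \<Sum>\<mu>\<in>{\<mu>\<in>S. \<mu> j = a}. b \<mu> * (\<Prod>i\<in>UNIV. ?y$i ^ \<mu> i))"
          unfolding q_def sum_distrib_right split_j
          by (intro sum.cong refl) (simp add: Compl_eq_Diff_UNIV mult_ac)
        also have "\<dots> = (\<Sum>\<mu>\<in>S. b \<mu> * (\<Prod>i\<in>UNIV. ?y$i ^ \<mu> i))"
          using insert.prems(1) by (rule sum.image_gen[symmetric])
        also have "\<dots> = 0" by (rule insert.prems(4))
        finally show ?thesis .
      qed
      have "q (\<nu> j) = 0"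
        by (rule coeff_eq_0_if_sum_powers_vanish[OF _ q_vanish]) (use insert.prems(1,2) in auto)
      moreover have "(\<Sum>\<mu>\<in>S'. b \<mu> * (\<Prod>i\<in>UNIV. y$i ^ \<mu> i)) = y$j ^ \<nu> j * q (\<nu> j)"
        unfolding q_def S'_def split_j sum_distrib_left by (intro sum.cong) (auto simp: mult_ac)
      ultimately show ?thesis by simp
    qed
    have S'_agree: "\<mu> i = \<nu> i" if "\<mu> \<in> S'" "i \<notin> V" for \<mu> i
      using that insert.prems(3)[of \<mu> i] by (cases "i = j") (auto simp: S'_def)
    show ?case
    proof (rule insert.IH[of S'])
      show "finite S'" "\<nu> \<in> S'" using insert.prems(1,2) by (auto simp: S'_def)
    qed (fact S'_agree S'_vanish)+
  qed
qed

lemma coeff_eq_0_if_sum_monomials_vanish: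
  fixes b :: "('n::finite \<Rightarrow> nat) \<Rightarrow> 'a::{idom,ring_char_0}"
  assumes "finite S" and "\<nu> \<in> S" and "\<And>x::'a^'n. (\<Sum>\<mu>\<in>S. b \<mu> * (\<Prod>i\<in>UNIV. x$i ^ \<mu> i)) = 0"
  shows "b \<nu> = 0"
  by (rule coeff_eq_0_if_sum_monomials_vanish_vars[where V=UNIV]) (use assms in auto)

section \<open>The Newton polyhedron of a weighted homogeneous polynomial\<close>

lemma weighted_degree_eq_if_coeff_nonzero:
  fixes c :: "('n::finite \<Rightarrow> nat) \<Rightarrow> real"
  assumes fin: "finite {\<nu>. c \<nu> \<noteq> 0}"
    and hom: "\<And>(l::real) x. poly_eval c (\<chi> i. l ^ w i * x$i) = l ^ W * poly_eval c x"
    and "c \<mu> \<noteq> 0"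
  shows "(\<Sum>i\<in>UNIV. w i * \<mu> i) = W"
proof -
  have scale: "(\<Prod>i\<in>UNIV. ((2::real) ^ w i * x$i) ^ \<nu> i)
      = 2 ^ (\<Sum>i\<in>UNIV. w i * \<nu> i) * (\<Prod>i\<in>UNIV. x$i ^ \<nu> i)" for x :: "real^'n" and \<nu>
    by (simp add: power_mult_distrib prod.distrib power_sum power_mult)
  have vanish: "(\<Sum>\<nu>\<in>{\<nu>. c \<nu> \<noteq> 0}.
      c \<nu> * (2 ^ (\<Sum>i\<in>UNIV. w i * \<nu> i) - 2 ^ W) * (\<Prod>i\<in>UNIV. x$i ^ \<nu> i)) = 0"
    for x :: "real^'n"
  proof -
    have "c \<nu> * (2 ^ (\<Sum>i\<in>UNIV. w i * \<nu> i) - 2 ^ W) * (\<Prod>i\<in>UNIV. x$i ^ \<nu> i)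
        = c \<nu> * (\<Prod>i\<in>UNIV. ((2::real) ^ w i * x$i) ^ \<nu> i) - 2 ^ W * (c \<nu> * (\<Prod>i\<in>UNIV. x$i ^ \<nu> i))"
      for \<nu> unfolding scale by (simp only: left_diff_distrib right_diff_distrib mult_ac)
    then have "(\<Sum>\<nu>\<in>{\<nu>. c \<nu> \<noteq> 0}. c \<nu> * (2 ^ (\<Sum>i\<in>UNIV. w i * \<nu> i) - 2 ^ W) * (\<Prod>i\<in>UNIV. x$i ^ \<nu> i))
        = poly_eval c (\<chi> i. 2 ^ w i * x$i) - 2 ^ W * poly_eval c x"
      by (simp only: poly_eval_def sum_subtractf sum_distrib_left vec_lambda_beta)
    also have "\<dots> = 0" using hom[of 2 x] by simp
    finally show ?thesis .
  qed
  have "c \<mu> * (2 ^ (\<Sum>i\<in>UNIV. w i * \<mu> i) - 2 ^ W) = 0"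
    by (rule coeff_eq_0_if_sum_monomials_vanish[OF _ _ vanish]) (use fin assms(3) in auto)
  then show ?thesis using assms(3) by simp
qed

lemma sum_pure_mono: "(\<Sum>j\<in>UNIV. w j * pure_mono (i::'n::finite) a j) = w i * (a::nat)"
proof -
  have "(\<Sum>j\<in>UNIV. w j * pure_mono i a j) = (\<Sum>j\<in>UNIV. if j = i then w i * a else 0)"
    by (intro sum.cong) (auto simp: pure_mono_def)
  then show ?thesis by simp
qed

definition delta_level :: "('n::finite \<Rightarrow> nat) \<Rightarrow> real^'n \<Rightarrow> real" where
  "delta_level delta x = (\<Sum>i\<in>UNIV. x$i / real (delta i))"

lemma delta_level_add [simp]:
  "delta_level delta (x + y) = delta_level delta x + delta_level delta y"
  by (simp add: delta_level_def add_divide_distrib sum.distrib)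

lemma delta_level_diff [simp]:
  "delta_level delta (x - y) = delta_level delta x - delta_level delta y"
  by (simp add: delta_level_def diff_divide_distrib sum_subtractf)

lemma delta_level_scaleR [simp]: "delta_level delta (a *\<^sub>R x) = a * delta_level delta x"
  by (simp add: delta_level_def sum_distrib_left)

lemma vec_nth_axis: "axis i a $ j = (if j = i then a else 0)"
  by (simp add: axis_def)

lemma delta_level_axis [simp]: "delta_level delta (axis i a) = a / real (delta i)"
proof -
  have "delta_level delta (axis i a) = (\<Sum>j\<in>UNIV. if j = i then a / real (delta i) else 0)"
    unfolding delta_level_def by (intro sum.cong) (auto simp: vec_nth_axis)
  then show ?thesis by simp
qed

lemma delta_level_exp_vec_eq_1:
  fixes c :: "('n::finite \<Rightarrow> nat) \<Rightarrow> real"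
  assumes fin: "finite {\<nu>. c \<nu> \<noteq> 0}" and wh: "weighted_homogeneous c"
    and delta: "\<And>i. delta i \<ge> 1 \<and> c (pure_mono i (delta i)) \<noteq> 0"
    and "c \<nu> \<noteq> 0"
  shows "delta_level delta (exp_vec \<nu>) = 1"
proof -
  obtain w :: "'n \<Rightarrow> nat" and W :: nat where "W > 0"
    and hom: "\<And>(l::real) x. poly_eval c (\<chi> i. l ^ w i * x$i) = l ^ W * poly_eval c x"
    using wh unfolding weighted_homogeneous_def by blast
  note degree = weighted_degree_eq_if_coeff_nonzero[OF fin hom]
  have term_eq: "real (\<nu> i) / real (delta i) = real (w i) * real (\<nu> i) / real W" for i
  proof -
    have wd: "w i * delta i = W"
      using degree[of "pure_mono i (delta i)"] delta[of i] by (simp add: sum_pure_mono)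
    then have "w i > 0" using \<open>W > 0\<close> by (cases "w i") auto
    moreover have "real W = real (w i) * real (delta i)" using wd by (metis of_nat_mult)
    ultimately show ?thesis by simp
  qed
  have "delta_level delta (exp_vec \<nu>) = (\<Sum>i\<in>UNIV. real (w i) * real (\<nu> i)) / real W"
    unfolding delta_level_def exp_vec_def sum_divide_distrib by (simp only: vec_lambda_beta term_eq)
  also have "\<dots> = 1"
    using degree[OF \<open>c \<nu> \<noteq> 0\<close>] \<open>W > 0\<close> by (simp flip: of_nat_mult of_nat_sum)
  finally show ?thesis .
qed

definition weighted_polyhedron :: "('n::finite \<Rightarrow> nat) \<Rightarrow> (real^'n) set" where
  "weighted_polyhedron delta = {x. (\<forall>i. 0 \<le> x$i) \<and> 1 \<le> delta_level delta x}"

definition weighted_simplex :: "('n::finite \<Rightarrow> nat) \<Rightarrow> 'n set \<Rightarrow> (real^'n) set" where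
  "weighted_simplex delta I =
     {x. (\<forall>i. 0 \<le> x$i) \<and> delta_level delta x = 1 \<and> (\<forall>i. i \<notin> I \<longrightarrow> x$i = 0)}"

lemma convex_weighted_polyhedron: "convex (weighted_polyhedron (delta :: 'n::finite \<Rightarrow> nat))"
proof (rule convexI)
  fix x y :: "real^'n" and u v :: real
  assume "x \<in> weighted_polyhedron delta" "y \<in> weighted_polyhedron delta"
    and uv: "0 \<le> u" "0 \<le> v" "u + v = 1"
  then have "u * 1 + v * 1 \<le> u * delta_level delta x + v * delta_level delta y"
    by (intro add_mono mult_left_mono) (auto simp: weighted_polyhedron_def)
  with \<open>x \<in> _\<close> \<open>y \<in> _\<close> uv show "u *\<^sub>R x + v *\<^sub>R y \<in> weighted_polyhedron delta"
    by (auto simp: weighted_polyhedron_def)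
qed

lemma weighted_simplex_subset: "weighted_simplex delta I \<subseteq> weighted_polyhedron delta"
  by (auto simp: weighted_simplex_def weighted_polyhedron_def)

lemma axis_in_weighted_polyhedron:
  assumes "0 < delta i" and "real (delta i) \<le> a"
  shows "axis i a \<in> weighted_polyhedron delta"
  using assms by (auto simp: weighted_polyhedron_def vec_nth_axis)

lemma axis_in_weighted_simplex_iff:
  assumes "0 < delta i"
  shows "axis i (real (delta i)) \<in> weighted_simplex delta I \<longleftrightarrow> i \<in> I"
  using assms by (auto simp: weighted_simplex_def vec_nth_axis)

lemma weighted_simplex_eq_iff:
  assumes "\<And>i. 0 < delta i"
  shows "weighted_simplex delta I = weighted_simplex delta J \<longleftrightarrow> I = J"
proof
  assume eq: "weighted_simplex delta I = weighted_simplex delta J"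
  show "I = J"
  proof (intro set_eqI)
    fix i
    have "i \<in> I \<longleftrightarrow> axis i (real (delta i)) \<in> weighted_simplex delta I"
      by (rule axis_in_weighted_simplex_iff[OF assms, symmetric])
    also have "\<dots> \<longleftrightarrow> i \<in> J"
      unfolding eq by (rule axis_in_weighted_simplex_iff[OF assms])
    finally show "i \<in> I \<longleftrightarrow> i \<in> J" .
  qed
qed simp

lemma sum_axis_scaled:
  fixes x :: "real^'n::finite"
  assumes "\<And>i. i \<in> I \<Longrightarrow> a i \<noteq> 0" and "\<And>i. i \<notin> I \<Longrightarrow> x$i = 0"
  shows "(\<Sum>i\<in>I. (x$i / a i) *\<^sub>R axis i (a i)) = x"
  using assms by (auto simp: vec_eq_iff vec_nth_axis if_distrib sum_component cong: if_cong)

lemma weighted_simplex_subset_hull: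
  assumes "\<And>i. 0 < delta i"
  shows "weighted_simplex delta I \<subseteq> convex hull ((\<lambda>i. axis i (real (delta i))) ` I)"
proof
  fix x assume x: "x \<in> weighted_simplex delta I"
  have "(\<Sum>i\<in>I. x$i / real (delta i)) = delta_level delta x"
    unfolding delta_level_def using x
    by (intro sum.mono_neutral_left) (auto simp: weighted_simplex_def)
  then have "(\<Sum>i\<in>I. (x$i / real (delta i)) *\<^sub>R axis i (real (delta i)))
      \<in> convex hull ((\<lambda>i. axis i (real (delta i))) ` I)"
    using x by (intro convex_sum) (auto simp: weighted_simplex_def hull_inc)
  then show "x \<in> convex hull ((\<lambda>i. axis i (real (delta i))) ` I)"
    using x assms by (simp add: sum_axis_scaled weighted_simplex_def)
qed

lemma newton_polyhedron_eq_weighted_polyhedron: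
  fixes c :: "('n::finite \<Rightarrow> nat) \<Rightarrow> real"
  assumes on_level: "\<And>\<nu>. c \<nu> \<noteq> 0 \<Longrightarrow> delta_level delta (exp_vec \<nu>) = 1"
    and delta: "\<And>i. delta i \<ge> 1 \<and> c (pure_mono i (delta i)) \<noteq> 0"
  shows "newton_polyhedron c = weighted_polyhedron delta"
proof
  show "newton_polyhedron c \<subseteq> weighted_polyhedron delta"
    unfolding newton_polyhedron_def
  proof (intro hull_minimal convex_weighted_polyhedron, clarify)
    fix \<nu> and x :: "real^'n" assume "c \<nu> \<noteq> 0" and le: "\<forall>i. real (\<nu> i) \<le> x$i"
    have "delta_level delta (exp_vec \<nu>) \<le> delta_level delta x"
      unfolding delta_level_def exp_vec_def using le by (intro sum_mono divide_right_mono) auto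
    then have "1 \<le> delta_level delta x" using on_level \<open>c \<nu> \<noteq> 0\<close> by simp
    moreover have "0 \<le> x$i" for i using le of_nat_0_le_iff order_trans by metis
    ultimately show "x \<in> weighted_polyhedron delta" by (simp add: weighted_polyhedron_def)
  qed
next
  show "weighted_polyhedron delta \<subseteq> newton_polyhedron c"
  proof
    fix x assume x: "x \<in> weighted_polyhedron delta"
    define s where "s = delta_level delta x"
    have "s \<ge> 1" using x by (simp add: s_def weighted_polyhedron_def)
    have dpos: "0 < real (delta i)" for i using delta[of i] by simp
    have vertex: "axis i (s * real (delta i)) \<in> newton_polyhedron c" for i
      unfolding newton_polyhedron_def
    proof (intro hull_inc UN_I)
      show "pure_mono i (delta i) \<in> {\<nu>. c \<nu> \<noteq> 0}" using delta[of i] by simp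
      show "axis i (s * real (delta i)) \<in> {x. \<forall>j. real (pure_mono i (delta i) j) \<le> x$j}"
        using \<open>s \<ge> 1\<close> dpos[of i] by (auto simp: vec_nth_axis pure_mono_def)
    qed
    have "(\<Sum>i\<in>UNIV. (x$i / (s * real (delta i))) *\<^sub>R axis i (s * real (delta i)))
        \<in> newton_polyhedron c"
      unfolding newton_polyhedron_def
    proof (intro convex_sum convex_convex_hull)
      show "(\<Sum>i\<in>UNIV. x$i / (s * real (delta i))) = 1"
        using \<open>s \<ge> 1\<close> by (simp add: s_def delta_level_def sum_divide_distrib[symmetric] mult.commute
            flip: divide_divide_eq_left)
    qed (use x \<open>s \<ge> 1\<close> vertex in \<open>auto simp: weighted_polyhedron_def newton_polyhedron_def\<close>)
    moreover have "(\<Sum>i\<in>UNIV. (x$i / (s * real (delta i))) *\<^sub>R axis i (s * real (delta i))) = x"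
      by (rule sum_axis_scaled) (use \<open>s \<ge> 1\<close> dpos in auto)
    ultimately show "x \<in> newton_polyhedron c" by simp
  qed
qed

section \<open>Compact faces and their dual cones\<close>

lemma axis_scaleR: "a *\<^sub>R axis i b = axis i (a * b :: real)"
  by (simp add: vec_eq_iff vec_nth_axis)

lemma axis_add: "axis i a + axis i b = axis i (a + b :: real)"
  by (simp add: vec_eq_iff vec_nth_axis)

lemma axis_in_open_segment:
  fixes p q a :: real
  assumes "p < a" and "a < q"
  shows "(axis i a :: real^'n::finite) \<in> open_segment (axis i p) (axis i q)"
  unfolding in_segment(2)
proof (intro conjI exI)
  define u where "u = (a - p) / (q - p)"
  show "axis i p \<noteq> (axis i q :: real^'n)" using assms by (simp add: axis_eq_axis)
  show "0 < u" "u < 1" using assms by (auto simp: u_def field_simps)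
  have "u * (q - p) = a - p" using assms by (simp add: u_def)
  then have "a = (1 - u) * p + u * q" by (simp add: algebra_simps)
  then show "axis i a = (1 - u) *\<^sub>R axis i p + u *\<^sub>R (axis i q :: real^'n)"
    by (simp add: axis_scaleR axis_add)
qed

lemma delta_level_pos:
  fixes x :: "real^'n::finite"
  assumes "\<And>i. 0 < delta i" and "\<And>i. 0 \<le> x$i" and "0 < x$j"
  shows "0 < delta_level delta x"
  unfolding delta_level_def using assms by (intro sum_pos2[of UNIV j]) auto

(* If a > delta_i, then axis i a is interior to a segment on the i-th axis inside the polyhedron,
   so the face contains the whole ray beyond a. *)
lemma axis_coordinate_of_compact_face:
  fixes tau :: "(real^'n::finite) set"
  assumes face: "tau face_of weighted_polyhedron delta" and "compact tau"
    and "0 < delta i" and ax: "axis i a \<in> tau"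
  shows "a = real (delta i)"
proof (rule ccontr)
  assume "a \<noteq> real (delta i)"
  moreover have "axis i a \<in> weighted_polyhedron delta" using ax face face_of_imp_subset by blast
  ultimately have "real (delta i) < a" using \<open>0 < delta i\<close> by (simp add: weighted_polyhedron_def)
  obtain B where B: "\<And>x. x \<in> tau \<Longrightarrow> norm x \<le> B"
    using compact_imp_bounded[OF \<open>compact tau\<close>] unfolding bounded_iff by blast
  define b where "b = max (a + 1) (B + 1)"
  have "axis i b \<in> tau"
  proof (rule conjunct2[OF face_ofD[OF face axis_in_open_segment _ _ ax]])
    show "real (delta i) < a" "a < b" by (fact \<open>real (delta i) < a\<close>) (simp add: b_def)
    show "axis i (real (delta i)) \<in> weighted_polyhedron delta"
      "axis i b \<in> weighted_polyhedron delta"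
      using \<open>0 < delta i\<close> \<open>real (delta i) < a\<close>
      by (auto simp: b_def intro!: axis_in_weighted_polyhedron)
  qed
  then have "\<bar>axis i b $ i\<bar> \<le> B" using B component_le_norm_cart order_trans by metis
  then show False by (simp add: b_def)
qed

(* Unless y lies on the i-th axis, it is interior to the segment joining the claimed point to
   the rest of y (the coordinates other than i), rescaled to the same level. *)
lemma axis_point_in_face:
  fixes y :: "real^'n::finite"
  assumes face: "tau face_of weighted_polyhedron delta" and dpos: "\<And>i. 0 < delta i"
    and "y \<in> tau" and "0 < y$i"
  shows "axis i (delta_level delta y * real (delta i)) \<in> tau"
proof -
  define s where "s = delta_level delta y"
  have y: "y \<in> weighted_polyhedron delta" using \<open>y \<in> tau\<close> face face_of_imp_subset by blast
  then have "1 \<le> s" and y_nonneg: "\<And>j. 0 \<le> y$j" by (auto simp: s_def weighted_polyhedron_def)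
  have axis_mem: "axis i (s * real (delta i)) \<in> weighted_polyhedron delta"
    using \<open>1 \<le> s\<close> dpos[of i] by (intro axis_in_weighted_polyhedron) auto
  define r where "r = y - axis i (y$i)"
  have r_nonneg: "0 \<le> r$j" for j using y_nonneg[of j] by (simp add: r_def vec_nth_axis)
  show ?thesis
  proof (cases "r = 0")
    case True
    then have y_axis: "y = axis i (y$i)" by (simp add: r_def)
    then have "s = y$i / real (delta i)" unfolding s_def by (metis delta_level_axis)
    then have "s * real (delta i) = y$i" using dpos[of i] by simp
    then have "axis i (s * real (delta i)) = y" using y_axis by metis
    then show ?thesis using \<open>y \<in> tau\<close> by (simp add: s_def)
  next
    case False
    then obtain j where "0 < r$j" using r_nonneg by (metis vec_eq_iff zero_index order_le_neq_trans)
    have "0 < delta_level delta r" using dpos r_nonneg \<open>0 < r$j\<close> by (rule delta_level_pos)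
    define l where "l = y$i / real (delta i) / s"
    have level_r: "delta_level delta r = s - y$i / real (delta i)"
      by (simp add: r_def s_def)
    have l: "0 < l" "l < 1"
      using \<open>0 < y$i\<close> \<open>1 \<le> s\<close> dpos[of i] \<open>0 < delta_level delta r\<close> level_r
      by (auto simp: l_def field_simps)
    have one_minus_l: "1 - l = delta_level delta r / s"
      using \<open>1 \<le> s\<close> by (simp add: level_r l_def field_simps)
    define z where "z = (s / delta_level delta r) *\<^sub>R r"
    have "delta_level delta z = s" using \<open>0 < delta_level delta r\<close> by (simp add: z_def)
    then have z_mem: "z \<in> weighted_polyhedron delta"
      using \<open>1 \<le> s\<close> \<open>0 < delta_level delta r\<close> r_nonneg by (simp add: weighted_polyhedron_def z_def)
    have "y = (1 - l) *\<^sub>R z + l *\<^sub>R axis i (s * real (delta i))"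
      using one_minus_l \<open>1 \<le> s\<close> \<open>0 < delta_level delta r\<close> dpos[of i]
      by (simp add: z_def r_def axis_scaleR l_def)
    moreover have "z $ i \<noteq> axis i (s * real (delta i)) $ i"
      using \<open>1 \<le> s\<close> dpos[of i] by (simp add: z_def r_def)
    then have "z \<noteq> axis i (s * real (delta i))" by metis
    ultimately have "y \<in> open_segment z (axis i (s * real (delta i)))"
      using l by (auto simp: in_segment(2))
    then show ?thesis
      using face_ofD[OF face _ z_mem axis_mem \<open>y \<in> tau\<close>] by (simp add: s_def)
  qed
qed

lemma compact_face_subset_weighted_simplex:
  assumes face: "tau face_of weighted_polyhedron delta" and "compact tau"
    and dpos: "\<And>i. 0 < delta i" and axes: "\<And>i a. axis i a \<in> tau \<Longrightarrow> i \<in> I"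
  shows "tau \<subseteq> weighted_simplex delta I"
proof
  fix y assume "y \<in> tau"
  then have y: "y \<in> weighted_polyhedron delta" using face face_of_imp_subset by blast
  then have y_nonneg: "\<And>j. 0 \<le> y$j" by (simp_all add: weighted_polyhedron_def)
  have "y \<noteq> 0" using y by (auto simp: weighted_polyhedron_def delta_level_def)
  then obtain i where "0 < y$i" using y_nonneg by (metis vec_eq_iff zero_index order_le_neq_trans)
  have "delta_level delta y * real (delta i) = real (delta i)"
    using axis_point_in_face[OF face dpos \<open>y \<in> tau\<close> \<open>0 < y$i\<close>]
    by (rule axis_coordinate_of_compact_face[OF face \<open>compact tau\<close> dpos])
  then have "delta_level delta y = 1" using dpos[of i] by simp
  moreover have "y$j = 0" if "j \<notin> I" for j
  proof (rule ccontr)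
    assume "y$j \<noteq> 0"
    then have "0 < y$j" using y_nonneg[of j] by simp
    then show False using axes axis_point_in_face[OF face dpos \<open>y \<in> tau\<close>] that by blast
  qed
  ultimately show "y \<in> weighted_simplex delta I" using y_nonneg by (simp add: weighted_simplex_def)
qed

lemma compact_face_eq_weighted_simplex:
  fixes tau :: "(real^'n::finite) set"
  assumes face: "tau face_of weighted_polyhedron delta" and "compact tau"
    and dpos: "\<And>i. 0 < delta i"
    and axes: "\<And>i. (\<exists>x\<in>tau. \<forall>j. j \<noteq> i \<longrightarrow> x$j = 0) \<longleftrightarrow> i \<in> I"
  shows "tau = weighted_simplex delta I"
proof
  have on_axis: "(\<forall>j. j \<noteq> i \<longrightarrow> x$j = 0) \<longleftrightarrow> x = axis i (x$i)" for i and x :: "real^'n"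
    by (auto simp: vec_eq_iff vec_nth_axis)
  show "tau \<subseteq> weighted_simplex delta I"
  proof (rule compact_face_subset_weighted_simplex[OF face \<open>compact tau\<close> dpos])
    show "i \<in> I" if "axis i a \<in> tau" for i a
      using that axes[of i] on_axis[of i "axis i a"] by auto
  qed
  have "axis i (real (delta i)) \<in> tau" if "i \<in> I" for i
  proof -
    obtain x where "x \<in> tau" "x = axis i (x$i)" using axes[of i] on_axis \<open>i \<in> I\<close> by blast
    then show ?thesis using axis_coordinate_of_compact_face[OF face \<open>compact tau\<close> dpos] by metis
  qed
  then have "convex hull ((\<lambda>i. axis i (real (delta i))) ` I) \<subseteq> tau"
    using face_of_imp_convex[OF face] by (intro hull_minimal) auto
  then show "weighted_simplex delta I \<subseteq> tau"
    using weighted_simplex_subset_hull[of delta I] dpos by blast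
qed

lemma inner_eq_delta_level_plus_slack:
  fixes k x :: "real^'n::finite"
  shows "k \<bullet> x = m * delta_level delta x + (\<Sum>i\<in>UNIV. (k$i - m / real (delta i)) * x$i)"
  unfolding inner_vec_def delta_level_def sum_distrib_left sum.distrib[symmetric]
  by (rule sum.cong) (auto simp: algebra_simps)

lemma Min_weight_div_le:
  fixes k :: "real^'n::finite"
  assumes "0 < delta i"
  shows "Min (range (\<lambda>j. k$j * real (delta j))) / real (delta i) \<le> k$i"
proof -
  have "Min (range (\<lambda>j. k$j * real (delta j))) \<le> k$i * real (delta i)" by simp
  then show ?thesis using assms by (simp add: field_simps)
qed

lemma supp_fun_weighted_polyhedron:
  fixes k :: "real^'n::finite"
  assumes k: "\<And>i. 0 \<le> k$i" and dpos: "\<And>i. 0 < delta i"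
  shows "supp_fun (weighted_polyhedron delta) k = Min (range (\<lambda>i. k$i * real (delta i)))"
  unfolding supp_fun_def
proof (rule cInf_eq_minimum)
  define m where "m = Min (range (\<lambda>i. k$i * real (delta i)))"
  have "m \<in> range (\<lambda>i. k$i * real (delta i))" unfolding m_def by (rule Min_in) auto
  then obtain i0 where i0: "m = k$i0 * real (delta i0)" by blast
  have "k \<bullet> axis i0 (real (delta i0)) = m" by (simp add: inner_axis i0)
  moreover have "axis i0 (real (delta i0)) \<in> weighted_polyhedron delta"
    using dpos by (intro axis_in_weighted_polyhedron) auto
  ultimately show "m \<in> (\<lambda>x. k \<bullet> x) ` weighted_polyhedron delta" by force
  fix t assume "t \<in> (\<lambda>x. k \<bullet> x) ` weighted_polyhedron delta"
  then obtain x where x: "x \<in> weighted_polyhedron delta" and t: "t = k \<bullet> x" by blast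
  have "0 \<le> m" using i0 k[of i0] by simp
  then have "m \<le> m * delta_level delta x"
    using x mult_left_mono[of 1 "delta_level delta x" m] by (simp add: weighted_polyhedron_def)
  moreover have "0 \<le> (\<Sum>i\<in>UNIV. (k$i - m / real (delta i)) * x$i)"
    using x Min_weight_div_le[where k=k and delta=delta, OF dpos]
    by (intro sum_nonneg mult_nonneg_nonneg) (auto simp: m_def weighted_polyhedron_def)
  ultimately show "m \<le> t"
    using inner_eq_delta_level_plus_slack[of k x m delta] t by linarith
qed

lemma weighted_polyhedron_supporting_face:
  fixes k :: "real^'n::finite"
  assumes dpos: "\<And>i. 0 < delta i"
    and m: "m = Min (range (\<lambda>i. k$i * real (delta i)))" and "0 < m"
  shows "{x \<in> weighted_polyhedron delta. k \<bullet> x = m}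
    = weighted_simplex delta {i. k$i * real (delta i) = m}"
proof -
  define slack where "slack x i = (k$i - m / real (delta i)) * x$i" for x :: "real^'n" and i
  have coeff_nonneg: "0 \<le> k$i - m / real (delta i)" for i
    using Min_weight_div_le[where k=k and delta=delta and i=i, OF dpos] by (simp add: m)
  have coeff_eq_0: "k$i - m / real (delta i) = 0 \<longleftrightarrow> k$i * real (delta i) = m" for i
    using dpos[of i] by (auto simp: field_simps)
  have inner: "k \<bullet> x = m * delta_level delta x + sum (slack x) UNIV" for x
    unfolding slack_def by (rule inner_eq_delta_level_plus_slack)
  show ?thesis
  proof (intro set_eqI iffI)
    fix x assume "x \<in> {x \<in> weighted_polyhedron delta. k \<bullet> x = m}"
    then have x_nonneg: "\<And>i. 0 \<le> x$i" and "1 \<le> delta_level delta x"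
      and sum_eq: "m * delta_level delta x + sum (slack x) UNIV = m"
      by (auto simp: weighted_polyhedron_def inner)
    have slack_nonneg: "0 \<le> slack x i" for i
      unfolding slack_def using coeff_nonneg x_nonneg by simp
    then have "0 \<le> sum (slack x) UNIV" by (simp add: sum_nonneg)
    moreover have "m \<le> m * delta_level delta x"
      using \<open>1 \<le> delta_level delta x\<close> \<open>0 < m\<close> by simp
    ultimately have "sum (slack x) UNIV = 0" and "m * delta_level delta x = m"
      using sum_eq by linarith+
    then have slack_0: "slack x i = 0" for i using slack_nonneg by (simp add: sum_nonneg_eq_0_iff)
    have "delta_level delta x = 1" using \<open>m * delta_level delta x = m\<close> \<open>0 < m\<close> by simp
    have "x$i = 0" if "k$i * real (delta i) \<noteq> m" for i
      using that slack_0[of i] coeff_eq_0[of i] by (simp add: slack_def)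
    with x_nonneg \<open>delta_level delta x = 1\<close>
    show "x \<in> weighted_simplex delta {i. k$i * real (delta i) = m}"
      by (simp add: weighted_simplex_def)
  next
    fix x assume x: "x \<in> weighted_simplex delta {i. k$i * real (delta i) = m}"
    then have "slack x i = 0" for i
      using coeff_eq_0[of i] by (auto simp: slack_def weighted_simplex_def)
    then show "x \<in> {x \<in> weighted_polyhedron delta. k \<bullet> x = m}"
      using x weighted_simplex_subset[of delta] by (auto simp: inner weighted_simplex_def)
  qed
qed

lemma supporting_face_at_0_neq_weighted_simplex:
  fixes k :: "real^'n::finite"
  assumes dpos: "\<And>i. 0 < delta i" and "k$i = 0"
  shows "{x \<in> weighted_polyhedron delta. k \<bullet> x = 0} \<noteq> weighted_simplex delta I"
proof -
  define x where "x = axis i (2 * real (delta i))"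
  have "x \<in> {x \<in> weighted_polyhedron delta. k \<bullet> x = 0}"
    using \<open>k$i = 0\<close> dpos[of i] by (auto simp: x_def inner_axis intro!: axis_in_weighted_polyhedron)
  moreover have "delta_level delta x = 2" using dpos[of i] by (simp add: x_def)
  then have "x \<notin> weighted_simplex delta I" by (simp add: weighted_simplex_def)
  ultimately show ?thesis by blast
qed

lemma Min_range_eq_if_attained_on:
  fixes f :: "'n::finite \<Rightarrow> 'a::linorder"
  assumes "I \<noteq> {}" and on: "\<And>i. i \<in> I \<Longrightarrow> f i = n" and off: "\<And>i. i \<notin> I \<Longrightarrow> n < f i"
  shows "Min (range f) = n"
proof (rule Min_eqI)
  show "n \<le> t" if "t \<in> range f" for t
    using that on off by (metis imageE order_less_imp_le order_refl)
  obtain i where "i \<in> I" using \<open>I \<noteq> {}\<close> by blast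
  then show "n \<in> range f" using on by (metis rangeI)
qed simp

lemma dual_cone_weighted_simplex_iff:
  fixes k :: "real^'n::finite"
  assumes k: "\<And>i. 0 \<le> k$i" and dpos: "\<And>i. 0 < delta i" and "I \<noteq> {}"
  shows "k \<in> dual_cone (weighted_polyhedron delta) (weighted_simplex delta I)
      \<and> supp_fun (weighted_polyhedron delta) k = n
    \<longleftrightarrow> 0 < n \<and> (\<forall>i\<in>I. k$i * real (delta i) = n) \<and> (\<forall>i. i \<notin> I \<longrightarrow> n < k$i * real (delta i))"
    (is "?lhs \<longleftrightarrow> ?rhs")
proof -
  define m where "m = Min (range (\<lambda>i. k$i * real (delta i)))"
  define face where "face = {x \<in> weighted_polyhedron delta. k \<bullet> x = m}"
  have m_le: "m \<le> k$i * real (delta i)" for i unfolding m_def by simp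
  have supp: "supp_fun (weighted_polyhedron delta) k = m"
    unfolding m_def using k dpos by (rule supp_fun_weighted_polyhedron)
  have dual: "k \<in> dual_cone (weighted_polyhedron delta) (weighted_simplex delta I)
      \<longleftrightarrow> face = weighted_simplex delta I"
    using k by (simp add: dual_cone_def supp face_def)
  have face_eq: "face = weighted_simplex delta {i. k$i * real (delta i) = m}" if "0 < m"
    unfolding face_def using dpos m_def that by (rule weighted_polyhedron_supporting_face)
  have m_pos: "0 < m" if "face = weighted_simplex delta I"
  proof (rule ccontr)
    assume "\<not> 0 < m"
    have "m \<in> range (\<lambda>i. k$i * real (delta i))" unfolding m_def by (rule Min_in) auto
    then obtain i where "m = k$i * real (delta i)" by blast
    with \<open>\<not> 0 < m\<close> k[of i] dpos[of i] have "m = 0" "k$i = 0"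
      by (auto simp: zero_less_mult_iff)
    then show False
      using that supporting_face_at_0_neq_weighted_simplex[where delta=delta, OF dpos]
      by (simp add: face_def)
  qed
  show ?thesis
  proof
    assume ?lhs
    then have "m = n" and "face = weighted_simplex delta I" using dual supp by auto
    then have "0 < m" using m_pos by blast
    then have "weighted_simplex delta {i. k$i * real (delta i) = m} = weighted_simplex delta I"
      using face_eq \<open>face = weighted_simplex delta I\<close> by simp
    then have attained: "{i. k$i * real (delta i) = m} = I"
      by (simp only: weighted_simplex_eq_iff[of delta, OF dpos])
    have "n < k$i * real (delta i)" if "i \<notin> I" for i
      using that attained m_le[of i] \<open>m = n\<close> by (auto simp: order_less_le)
    then show ?rhs using attained \<open>0 < m\<close> \<open>m = n\<close> by blast
  next
    assume rhs: ?rhs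
    then have "m = n" unfolding m_def using \<open>I \<noteq> {}\<close> by (intro Min_range_eq_if_attained_on) auto
    then have "{i. k$i * real (delta i) = m} = I" using rhs by (auto simp: order_less_irrefl)
    moreover have "0 < m" using rhs \<open>m = n\<close> by simp
    ultimately show ?lhs using dual supp face_eq \<open>m = n\<close> by simp
  qed
qed

section \<open>Counting lattice points\<close>

definition weak_compositions :: "'n::finite set \<Rightarrow> nat \<Rightarrow> ('n \<Rightarrow> nat) set" where
  "weak_compositions J j = {u. (\<forall>i. i \<notin> J \<longrightarrow> u i = 0) \<and> sum u UNIV = j}"

lemma le_sum_UNIV: "f i \<le> sum f UNIV" for f :: "'n::finite \<Rightarrow> nat"
  by (rule member_le_sum) auto

lemma finite_weak_compositions: "finite (weak_compositions J j)"
proof (rule finite_subset)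
  show "weak_compositions J j \<subseteq> Pi\<^sub>E UNIV (\<lambda>_. {..j})"
    using le_sum_UNIV by (auto simp: weak_compositions_def PiE_UNIV_domain Pi_def)
qed (simp add: finite_PiE)

lemma sum_UNIV_fun_upd:
  fixes f :: "'n::finite \<Rightarrow> 'a::comm_monoid_add"
  shows "sum (f(a := x)) UNIV = x + sum f (- {a})"
proof -
  have "sum (f(a := x)) (- {a}) = sum f (- {a})" by (rule sum.cong) auto
  then show ?thesis by (simp add: Compl_eq_Diff_UNIV sum.remove[of UNIV a])
qed

lemma card_weak_compositions_insert:
  fixes J :: "'n::finite set"
  assumes "a \<notin> J"
  shows "card (weak_compositions (insert a J) j) = (\<Sum>i\<le>j. card (weak_compositions J i))"
proof -
  define f :: "nat \<times> ('n \<Rightarrow> nat) \<Rightarrow> 'n \<Rightarrow> nat" where "f = (\<lambda>(i, u). u(a := j - i))"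
  define g :: "('n \<Rightarrow> nat) \<Rightarrow> nat \<times> ('n \<Rightarrow> nat)" where "g = (\<lambda>v. (j - v a, v(a := 0)))"
  have split_a: "sum v UNIV = v a + sum v (- {a})" for v :: "'n \<Rightarrow> nat"
    using sum_UNIV_fun_upd[of v a "v a"] by simp
  have "bij_betw f (SIGMA i:{..j}. weak_compositions J i) (weak_compositions (insert a J) j)"
  proof (rule bij_betw_byWitness[where f'=g]; intro ballI image_subsetI)
    fix p assume "p \<in> (SIGMA i:{..j}. weak_compositions J i)"
    then obtain i u where p: "p = (i, u)" "i \<le> j" and u: "u \<in> weak_compositions J i" by auto
    have "u a = 0" using u assms by (simp add: weak_compositions_def)
    then show "g (f p) = p" using p by (simp add: f_def g_def fun_upd_idem)
    have "sum (f p) UNIV = (j - i) + sum u (- {a})"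
      unfolding p f_def by (simp only: case_prod_conv sum_UNIV_fun_upd)
    also have "sum u (- {a}) = i"
      using u split_a[of u] \<open>u a = 0\<close> by (simp add: weak_compositions_def)
    finally have "sum (f p) UNIV = j" using p by simp
    moreover have "f p k = 0" if "k \<notin> insert a J" for k
      using u p that by (simp add: f_def weak_compositions_def)
    ultimately show "f p \<in> weak_compositions (insert a J) j" by (simp add: weak_compositions_def)
  next
    fix v assume v: "v \<in> weak_compositions (insert a J) j"
    then have "v a \<le> j" using le_sum_UNIV[of v a] by (simp add: weak_compositions_def)
    then show "f (g v) = v" by (simp add: f_def g_def)
    have "sum (v(a := 0)) UNIV = 0 + sum v (- {a})" by (rule sum_UNIV_fun_upd)
    moreover have "v a + sum v (- {a}) = j"
      using v split_a[of v] by (simp add: weak_compositions_def)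
    ultimately have "sum (v(a := 0)) UNIV = j - v a" by linarith
    then show "g v \<in> (SIGMA i:{..j}. weak_compositions J i)"
      using v by (auto simp: g_def weak_compositions_def)
  qed
  then show ?thesis
    by (simp add: bij_betw_same_card[symmetric] finite_weak_compositions)
qed

lemma weak_compositions_fps:
  "Abs_fps (\<lambda>j. of_nat (card (weak_compositions J j)))
    = (Abs_fps (\<lambda>_. 1) :: 'a::comm_semiring_1 fps) ^ card J"
proof (induction J rule: finite_induct[OF finite])
  case 1
  have empty: "weak_compositions {} j = (if j = 0 then {\<lambda>_. 0} else {})" for j
    by (auto simp: weak_compositions_def)
  show ?case by (simp add: fps_eq_iff empty)
next
  case (2 a J)
  then have "Abs_fps (\<lambda>j. of_nat (card (weak_compositions (insert a J) j)))
      = Abs_fps (\<lambda>j. of_nat (card (weak_compositions J j))) * (Abs_fps (\<lambda>_. 1) :: 'a fps)"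
    by (simp add: fps_eq_iff fps_mult_nth card_weak_compositions_insert atLeast0AtMost)
  with 2 show ?case by (simp add: mult.commute)
qed

lemma lattice_points_above_fps:
  fixes b :: "'n::finite \<Rightarrow> nat" and I :: "'n set"
  shows "Abs_fps (\<lambda>j. of_nat (card {k. (\<forall>i. b i \<le> k i) \<and> (\<forall>i\<in>I. k i = b i) \<and> sum k UNIV = j}))
    = fps_X ^ sum b UNIV * (Abs_fps (\<lambda>_. 1) :: 'a::comm_semiring_1 fps) ^ card (- I)"
proof -
  define B where "B = sum b UNIV"
  have shift: "{k. (\<forall>i. b i \<le> k i) \<and> (\<forall>i\<in>I. k i = b i) \<and> sum k UNIV = j}
      = (\<lambda>u i. b i + u i) ` weak_compositions (- I) (j - B)" if "B \<le> j" for j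
  proof (intro set_eqI iffI)
    fix k assume k: "k \<in> {k. (\<forall>i. b i \<le> k i) \<and> (\<forall>i\<in>I. k i = b i) \<and> sum k UNIV = j}"
    then have "sum (\<lambda>i. k i - b i) UNIV = j - B"
      by (simp add: B_def sum_subtractf_nat)
    then have "(\<lambda>i. k i - b i) \<in> weak_compositions (- I) (j - B)"
      using k by (simp add: weak_compositions_def)
    moreover have "k = (\<lambda>i. b i + (k i - b i))" using k by auto
    ultimately show "k \<in> (\<lambda>u i. b i + u i) ` weak_compositions (- I) (j - B)"
      by (metis (no_types) image_eqI)
  next
    fix k assume "k \<in> (\<lambda>u i. b i + u i) ` weak_compositions (- I) (j - B)"
    then obtain u where u: "u \<in> weak_compositions (- I) (j - B)"
      and k: "k = (\<lambda>i. b i + u i)" by blast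
    then have "sum k UNIV = B + (j - B)" by (simp add: B_def sum.distrib weak_compositions_def)
    then show "k \<in> {k. (\<forall>i. b i \<le> k i) \<and> (\<forall>i\<in>I. k i = b i) \<and> sum k UNIV = j}"
      using u k \<open>B \<le> j\<close> by (simp add: weak_compositions_def)
  qed
  have empty: "{k. (\<forall>i. b i \<le> k i) \<and> (\<forall>i\<in>I. k i = b i) \<and> sum k UNIV = j} = {}" if "j < B" for j
  proof -
    have le: "B \<le> sum k UNIV" if "\<forall>i. b i \<le> k i" for k
      unfolding B_def using that by (intro sum_mono) auto
    show ?thesis
    proof (rule equals0I)
      fix k assume "k \<in> {k. (\<forall>i. b i \<le> k i) \<and> (\<forall>i\<in>I. k i = b i) \<and> sum k UNIV = j}"
      then have "B \<le> j" using le[of k] by simp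
      then show False using \<open>j < B\<close> by simp
    qed
  qed
  have inj: "inj_on (\<lambda>u i. b i + u i) A" for A by (rule inj_onI) (simp add: fun_eq_iff)
  show ?thesis
    by (auto simp: fps_eq_iff fps_X_power_mult_nth shift empty card_image[OF inj]
        simp flip: weak_compositions_fps B_def)
qed

(* The lattice points k of sigma(tau_I) with m(k) = n and |k| = j, see S_series_weighted_simplex. *)
definition dual_lattice_points :: "('n::finite \<Rightarrow> nat) \<Rightarrow> 'n set \<Rightarrow> nat \<Rightarrow> nat \<Rightarrow> ('n \<Rightarrow> nat) set"
  where "dual_lattice_points delta I n j = {k. 0 < n \<and> (\<forall>i\<in>I. k i * delta i = n)
    \<and> (\<forall>i. i \<notin> I \<longrightarrow> n < k i * delta i) \<and> sum k UNIV = j}"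

lemma dual_lattice_points_empty:
  assumes "\<not> (\<exists>r\<ge>1. n = r * Lcm (delta ` I))"
  shows "dual_lattice_points delta I n j = {}"
proof (rule equals0I)
  fix k assume k: "k \<in> dual_lattice_points delta I n j"
  have "Lcm (delta ` I) dvd n"
    using k by (intro Lcm_least) (auto simp: dual_lattice_points_def dvd_triv_right)
  then obtain r where "n = r * Lcm (delta ` I)" by (metis dvd_div_mult_self)
  moreover have "r \<ge> 1"
    using k \<open>n = r * Lcm (delta ` I)\<close> by (cases r) (auto simp: dual_lattice_points_def)
  ultimately show False using assms by blast
qed

lemma dual_lattice_points_eq_points_above:
  fixes delta :: "'n::finite \<Rightarrow> nat"
  assumes dpos: "\<And>i. 0 < delta i" and "r \<ge> 1" and n: "n = r * Lcm (delta ` I)"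
  defines "b \<equiv> \<lambda>i. n div delta i + (if i \<in> I then 0 else 1)"
  shows "dual_lattice_points delta I n j
    = {k. (\<forall>i. b i \<le> k i) \<and> (\<forall>i\<in>I. k i = b i) \<and> sum k UNIV = j}"
proof -
  have "0 \<notin> delta ` I" using dpos by (metis image_iff less_irrefl)
  then have "Lcm (delta ` I) \<noteq> 0" by (subst Lcm_0_iff) auto
  then have "0 < n" using \<open>r \<ge> 1\<close> n by (metis neq0_conv mult_is_0 not_one_le_zero)
  have "delta i dvd n" if "i \<in> I" for i using that n by (simp add: dvd_Lcm)
  then have "k i * delta i = n \<longleftrightarrow> k i = n div delta i" if "i \<in> I" for i k
    using that dpos[of i] by auto
  moreover have "n < k i * delta i \<longleftrightarrow> n div delta i + 1 \<le> k i" for i k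
    using div_less_iff_less_mult[OF dpos[of i], of n "k i"] by auto
  ultimately show ?thesis using \<open>0 < n\<close> by (auto simp: b_def dual_lattice_points_def)
qed

lemma dual_lattice_points_fps:
  fixes delta :: "'n::finite \<Rightarrow> nat" and I :: "'n set"
  assumes dpos: "\<And>i. 0 < delta i"
  shows "Abs_fps (\<lambda>j. of_nat (card (dual_lattice_points delta I n j)))
    = (if \<exists>r\<ge>1. n = r * Lcm (delta ` I)
       then fps_X ^ ((\<Sum>i\<in>UNIV. n div delta i) + card (- I)) * Abs_fps (\<lambda>_. 1) ^ card (- I)
       else (0 :: 'a::comm_semiring_1 fps))"
proof (cases "\<exists>r\<ge>1. n = r * Lcm (delta ` I)")
  case False
  then show ?thesis
    by (simp only: dual_lattice_points_empty[OF False] if_False) (simp add: fps_eq_iff)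
next
  case True
  then obtain r where "r \<ge> 1" and n: "n = r * Lcm (delta ` I)" by blast
  define b where "b i = n div delta i + (if i \<in> I then 0 else 1)" for i
  have "sum b UNIV = (\<Sum>i\<in>UNIV. n div delta i) + card (- I)"
    by (simp add: b_def sum.distrib sum.If_cases Compl_eq_Diff_UNIV)
  then show ?thesis
    using True lattice_points_above_fps[of b I]
    by (simp add: dual_lattice_points_eq_points_above[OF dpos \<open>r \<ge> 1\<close> n] b_def)
qed

lemma one_div_fls_X_inv_minus_one:
  "1 / (fls_X_inv - 1) = fls_X * fps_to_fls (Abs_fps (\<lambda>_. 1 :: 'a::field))"
proof -
  have geometric: "Abs_fps (\<lambda>_. 1 :: 'a) * (1 - fps_X) = 1"
    using fps_inverse_gp'[where 'a='a] inverse_mult_eq_1'[of "Abs_fps (\<lambda>_. 1 :: 'a)"] by simp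
  have "fls_X * fls_X_inv = (1 :: 'a fls)" by (simp add: fls_X_inv_times_conv_shift)
  then have "fls_X * fps_to_fls (Abs_fps (\<lambda>_. 1 :: 'a)) * (fls_X_inv - 1)
      = fps_to_fls (Abs_fps (\<lambda>_. 1)) * (fls_X * fls_X_inv) - fls_X * fps_to_fls (Abs_fps (\<lambda>_. 1))"
    by (simp add: algebra_simps)
  also have "\<dots> = fps_to_fls (Abs_fps (\<lambda>_. 1) * (1 - fps_X))"
    by (simp add: \<open>fls_X * fls_X_inv = 1\<close> fls_times_fps_to_fls algebra_simps)
  also have "\<dots> = 1" by (simp add: geometric)
  finally have "(fls_X_inv - 1) * (fls_X * fps_to_fls (Abs_fps (\<lambda>_. 1 :: 'a))) = 1"
    by (simp only: mult.commute)
  then show ?thesis by (simp only: divide_inverse mult_1 inverse_unique)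
qed

lemma exp_vec_nth [simp]: "exp_vec k $ i = real (k i)"
  by (simp add: exp_vec_def)

lemma S_series_weighted_simplex:
  fixes delta :: "'n::finite \<Rightarrow> nat" and I :: "'n set"
  assumes dpos: "\<And>i. 0 < delta i" and "I \<noteq> {}"
  shows "S_series (weighted_polyhedron delta) (weighted_simplex delta I) =
    Abs_fps (\<lambda>n. if \<exists>r\<ge>1. n = r * Lcm (delta ` I)
       then (1 / (fls_X_inv - 1)) ^ (CARD('n) - card I)
            * fls_X ^ nat (\<Sum>i\<in>UNIV. \<lfloor>real n / real (delta i)\<rfloor>)
       else 0)"
proof (rule fps_ext)
  fix n
  define N where "N = (\<Sum>i\<in>UNIV. n div delta i)"
  define c where "c = card (- I)"
  have "c = CARD('n) - card I" by (simp add: c_def Compl_eq_Diff_UNIV card_Diff_subset)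
  have cone: "exp_vec k \<in> dual_cone (weighted_polyhedron delta) (weighted_simplex delta I)
        \<and> supp_fun (weighted_polyhedron delta) (exp_vec k) = real n
      \<longleftrightarrow> 0 < n \<and> (\<forall>i\<in>I. k i * delta i = n) \<and> (\<forall>i. i \<notin> I \<longrightarrow> n < k i * delta i)" for k
    using dual_cone_weighted_simplex_iff[of "exp_vec k" delta I "real n"] dpos \<open>I \<noteq> {}\<close>
    by (simp add: of_nat_mult[symmetric] del: of_nat_mult)
  have points: "{k. exp_vec k \<in> dual_cone (weighted_polyhedron delta) (weighted_simplex delta I)
        \<and> supp_fun (weighted_polyhedron delta) (exp_vec k) = real n \<and> sum k UNIV = j}
      = dual_lattice_points delta I n j" for j
    unfolding dual_lattice_points_def by (rule Collect_cong) (use cone in blast)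
  have "fps_to_fls (fps_X ^ (N + c) * Abs_fps (\<lambda>_. 1 :: real) ^ c)
      = fls_X ^ N * (fls_X * fps_to_fls (Abs_fps (\<lambda>_. 1 :: real))) ^ c"
    by (simp add: fls_times_fps_to_fls fps_to_fls_power power_add power_mult_distrib mult_ac)
  also have "\<dots> = (1 / (fls_X_inv - 1)) ^ (CARD('n) - card I) * fls_X ^ N"
    by (simp add: one_div_fls_X_inv_minus_one \<open>c = CARD('n) - card I\<close> mult.commute)
  finally have shifted: "fps_to_fls (fps_X ^ (N + c) * Abs_fps (\<lambda>_. 1 :: real) ^ c)
      = (1 / (fls_X_inv - 1)) ^ (CARD('n) - card I) * fls_X ^ N" .
  have floor_sum: "nat (\<Sum>i\<in>UNIV. \<lfloor>real n / real (delta i)\<rfloor>) = N"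
    by (simp add: N_def floor_divide_of_nat_eq flip: of_nat_sum)
  have "S_series (weighted_polyhedron delta) (weighted_simplex delta I) $ n
      = fps_to_fls (if \<exists>r\<ge>1. n = r * Lcm (delta ` I)
          then fps_X ^ (N + c) * Abs_fps (\<lambda>_. 1) ^ c else 0)"
    unfolding S_series_def fps_nth_Abs_fps points dual_lattice_points_fps[OF dpos] N_def c_def ..
  then show "S_series (weighted_polyhedron delta) (weighted_simplex delta I) $ n =
    Abs_fps (\<lambda>n. if \<exists>r\<ge>1. n = r * Lcm (delta ` I)
       then (1 / (fls_X_inv - 1)) ^ (CARD('n) - card I)
            * fls_X ^ nat (\<Sum>i\<in>UNIV. \<lfloor>real n / real (delta i)\<rfloor>)
       else 0) $ n"
    by (simp only: fps_nth_Abs_fps if_distrib[of fps_to_fls] fps_zero_to_fls shifted floor_sum)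
qed

theorem lemma4p6:
  fixes c :: "('n::finite \<Rightarrow> nat) \<Rightarrow> real"
    and delta :: "'n \<Rightarrow> nat"
    and I :: "'n set"
    and tau :: "(real^'n) set"
  assumes fin: "finite {nu. c nu \<noteq> 0}"
    and conv: "convenient c"
    and nondeg: "non_degenerate c"
    and wh: "weighted_homogeneous c"
    and delta: "\<And>i. delta i \<ge> 1 \<and> c (pure_mono i (delta i)) \<noteq> 0"
    and I: "I \<noteq> {}"
    and tau_face: "compact_face c tau"
    and tau_axes: "\<And>i. (\<exists>x\<in>tau. \<forall>j. j \<noteq> i \<longrightarrow> x$j = 0) \<longleftrightarrow> i \<in> I"
  shows "S_series (newton_polyhedron c) tau =
    Abs_fps (\<lambda>n. if (\<exists>r\<ge>1. n = r * Lcm (delta ` I))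
       then (1 / (fls_X_inv - 1)) ^ (CARD('n) - card I)
            * fls_X ^ nat (\<Sum>i\<in>UNIV. \<lfloor>real n / real (delta i)\<rfloor>)
       else 0)"
proof -
  have dpos: "0 < delta i" for i using delta[of i] by simp
  have newton: "newton_polyhedron c = weighted_polyhedron delta"
    using delta_level_exp_vec_eq_1[OF fin wh delta] delta
    by (rule newton_polyhedron_eq_weighted_polyhedron)
  have "tau = weighted_simplex delta I"
  proof (rule compact_face_eq_weighted_simplex[OF _ _ dpos tau_axes])
    show "tau face_of weighted_polyhedron delta" "compact tau"
      using tau_face newton by (simp_all add: compact_face_def)
  qed
  then show ?thesis using S_series_weighted_simplex[OF dpos I] newton by simp
qed

end
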